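(* Let $v^*\in\Delta$ be a linearly stable equilibrium. Then almost surely on the event $\{\lim_{n\to\infty}v_n=v^*\}$, the set $E\setminus\mathrm{supp}(v^* )$ is visited by $(X_n)$ only finitely many times.
   Context: Let $N\ge2$, $E=\{1,\dots,N\}$, $\alpha>1$, and let $A=(A_{i,j})_{i,j\le N}$ be a symmetric matrix with nonnegative entries, $A_{i,j}>0$ for $i\ne j$, and $\sum_j A_{i,j}$ independent of $i$. Let $(X_n)_{n\ge0}$ be a process on $E$ with arbitrary initial state such that, with $\mathcal F_n=\sigma(X_k;k\le n)$ and $Z_n(j)=\sum_{\ell=0}^n\mathbf 1_{\{X_\ell=j\}}$, $\mathbb P(X_{n+1}=j\mid\mathcal F_n)=\dfrac{A_{X_n,j}(1+Z_n(j))^\alpha}{\sum_{k\le N}A_{X_n,k}(1+Z_n(k))^\alpha}$, and let $v_n(i)=Z_n(i)/(n+1)$. Let $\Delta=\{v\in\mathbb R_+^N:\ \sum_i v_i=1,\ v_i\le 3/4 \text{ whenever } A_{i,i}=0\}$. For $v$ with nonnegative coordinates let $v^\alpha=(v_i^\alpha)_i$, $H(v)=\sum_{i,j}A_{i,j}v_i^\alpha v_j^\alpha$, $\pi_i(v)=v_i^\alpha(Av^\alpha)_i/H(v)$, and on $\Delta$ let $F(v)=-v+\pi(v)$. An equilibrium is $v\in\Delta$ with $F(v)=0$; with $DF(v)$ the differential at $v$ of $v\mapsto -v+\pi(v)$ acting on $\{x:\sum_ix_i=0\}$, an equilibrium is linearly stable if all eigenvalues of $DF(v)$ have negative real parts.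 $\mathrm{supp}(v)=\{i:v_i\ne0\}$. *)

theory Defs
  imports "HOL-Analysis.Analysis" "HOL-Probability.Probability"
begin

text \<open>The state space E is represented by a finite type 'n (E = UNIV, N = CARD('n)).
  Vectors in R^N are elements of real^'n, the matrix A is real^'n^'n.\<close>

definition vpow :: "real \<Rightarrow> real^'n \<Rightarrow> real^'n" where
  "vpow \<alpha> v = (\<chi> i. (v $ i) powr \<alpha>)"

definition Hfun :: "real^'n^'n \<Rightarrow> real \<Rightarrow> real^'n \<Rightarrow> real" where
  "Hfun A \<alpha> v = (\<Sum>i\<in>UNIV. \<Sum>j\<in>UNIV. A $ i $ j * (v $ i) powr \<alpha> * (v $ j) powr \<alpha>)"

definition pifun :: "real^'n^'n \<Rightarrow> real \<Rightarrow> real^'n \<Rightarrow> real^'n" where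
  "pifun A \<alpha> v = (\<chi> i. (v $ i) powr \<alpha> * (A *v vpow \<alpha> v) $ i / Hfun A \<alpha> v)"

definition Ffun :: "real^'n^'n \<Rightarrow> real \<Rightarrow> real^'n \<Rightarrow> real^'n" where
  "Ffun A \<alpha> v = - v + pifun A \<alpha> v"

definition Delta :: "real^'n^'n \<Rightarrow> (real^'n) set" where
  "Delta A = {v. (\<forall>i. 0 \<le> v $ i) \<and> (\<Sum>i\<in>UNIV. v $ i) = 1 \<and> (\<forall>i. A $ i $ i = 0 \<longrightarrow> v $ i \<le> 3/4)}"

definition equilibrium :: "real^'n^'n \<Rightarrow> real \<Rightarrow> real^'n \<Rightarrow> bool" where
  "equilibrium A \<alpha> v \<longleftrightarrow> v \<in> Delta A \<and> Ffun A \<alpha> v = 0"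

definition tangent_space :: "(real^'n) set" where
  "tangent_space = {x. (\<Sum>i\<in>UNIV. x $ i) = 0}"

text \<open>All (complex) eigenvalues of the real linear map L acting on T have negative real part:
  a + i b is an eigenvalue of the complexification iff there are x, y in T, not both zero,
  with L(x + i y) = (a + i b)(x + i y).\<close>
definition eigenvalues_neg_re_on :: "(real^'n) set \<Rightarrow> (real^'n \<Rightarrow> real^'n) \<Rightarrow> bool" where
  "eigenvalues_neg_re_on T L \<longleftrightarrow>
     (\<forall>a b. (\<exists>x y. x \<in> T \<and> y \<in> T \<and> (x \<noteq> 0 \<or> y \<noteq> 0) \<and>
                   L x = a *\<^sub>R x - b *\<^sub>R y \<and> L y = b *\<^sub>R x + a *\<^sub>R y) \<longrightarrow> a < 0)"

definition linearly_stable :: "real^'n^'n \<Rightarrow> real \<Rightarrow> real^'n \<Rightarrow> bool" where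
  "linearly_stable A \<alpha> v \<longleftrightarrow> equilibrium A \<alpha> v \<and>
     (\<exists>DF. (Ffun A \<alpha> has_derivative DF) (at v within Delta A) \<and>
           (\<forall>x\<in>tangent_space. DF x \<in> tangent_space) \<and>
           eigenvalues_neg_re_on tangent_space DF)"

definition Zcount :: "(nat \<Rightarrow> 'w \<Rightarrow> 'n) \<Rightarrow> nat \<Rightarrow> 'w \<Rightarrow> 'n \<Rightarrow> nat" where
  "Zcount X n \<omega> j = card {l. l \<le> n \<and> X l \<omega> = j}"

definition empirical :: "(nat \<Rightarrow> 'w \<Rightarrow> 'n::finite) \<Rightarrow> nat \<Rightarrow> 'w \<Rightarrow> real^'n" where
  "empirical X n \<omega> = (\<chi> i. real (Zcount X n \<omega> i) / real (n + 1))"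

definition nat_filtration :: "'w measure \<Rightarrow> (nat \<Rightarrow> 'w \<Rightarrow> 'n) \<Rightarrow> nat \<Rightarrow> 'w measure" where
  "nat_filtration M X n = sigma (space M) (\<Union>k\<in>{..n}. {X k -` B \<inter> space M | B. True})"

definition trans_prob :: "real^'n^'n \<Rightarrow> real \<Rightarrow> (nat \<Rightarrow> 'w \<Rightarrow> 'n::finite) \<Rightarrow> nat \<Rightarrow> 'w \<Rightarrow> 'n \<Rightarrow> real" where
  "trans_prob A \<alpha> X n \<omega> j =
     A $ (X n \<omega>) $ j * (1 + real (Zcount X n \<omega> j)) powr \<alpha> /
     (\<Sum>k\<in>UNIV. A $ (X n \<omega>) $ k * (1 + real (Zcount X n \<omega> k)) powr \<alpha>)"

end

theory Submission
  imports Defs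
begin

(*
  Fix a site j outside the support of v*. On the event v_n --> v*, every row of A charges a site
  of supp v*, and such a site has been visited linearly often; hence the transition probability
  into j is at most K ((1 + Z_n(j)) / (n + 1))^alpha, while (1 + Z_n(j)) / (n + 1) --> 0.

  For any process with prescribed one-step transition probabilities, a site with this property is
  almost surely visited only finitely often. As long as P(X_(n+1) = j | F_n) is at most
  (1 + Z_n(j)) / (B (n + 1)), the expectation of (1 + Z_n(j))^b grows by at most a factor
  1 + 1/(n + 1) per step, so it is O(n); Markov's inequality and Borel-Cantelli give
  1 + Z_n(j) < n^eta eventually. Then a visit at time n + 1 has probability at most
  K n^((eta - 1) alpha), which is summable for eta = (1 - 1/alpha) / 2, and Borel-Cantelli
  again leaves only finitely many visits.

  Linear stability of v* is used only through v* : Delta.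
*)

lemma summable_powr_Suc_real: "s < -1 \<Longrightarrow> summable (\<lambda>n. (real n + 1) powr s)"
  using summable_real_powr_iff[of s] summable_Suc_iff[of "\<lambda>n. real n powr s"]
  by (simp add: add.commute)

lemma mult_power_add_one_diff_le:
  fixes z :: real
  assumes "1 \<le> z"
  shows "z * ((z + 1) ^ b - z ^ b) \<le> real b * 2 ^ b * z ^ b"
proof (induction b)
  case 0
  then show ?case by simp
next
  case (Suc b)
  have "z * ((z + 1) ^ Suc b - z ^ Suc b) = (z + 1) * (z * ((z + 1) ^ b - z ^ b)) + z * z ^ b"
    by (simp add: algebra_simps)
  also have "\<dots> \<le> (z + 1) * (real b * 2 ^ b * z ^ b) + z * z ^ b"
    using Suc assms by (intro add_mono mult_left_mono) auto
  also have "\<dots> \<le> (2 * z) * (real b * 2 ^ b * z ^ b) + z * z ^ b"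
    using assms by (intro add_mono mult_right_mono) auto
  also have "\<dots> = z ^ Suc b * (real b * 2 ^ Suc b + 1)"
    by (simp add: algebra_simps)
  also have "\<dots> \<le> z ^ Suc b * (real (Suc b) * 2 ^ Suc b)"
  proof (rule mult_left_mono)
    have "(1::real) \<le> 2 ^ Suc b"
      by (rule one_le_power) simp
    then show "real b * 2 ^ Suc b + 1 \<le> real (Suc b) * 2 ^ Suc b"
      by (simp add: algebra_simps)
  qed (use assms in simp)
  finally show ?case by (simp add: algebra_simps)
qed

lemma powr_ratio_le_powr:
  fixes x z :: real
  assumes "0 \<le> z" "z < x powr \<eta>" "0 < x" "0 \<le> \<alpha>"
  shows "(z / x) powr \<alpha> \<le> x powr ((\<eta> - 1) * \<alpha>)"
proof -
  have "z / x \<le> x powr \<eta> / x"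
    using assms by (intro divide_right_mono) auto
  also have "\<dots> = x powr (\<eta> - 1)"
    using \<open>0 < x\<close> by (simp add: powr_diff)
  finally have "(z / x) powr \<alpha> \<le> (x powr (\<eta> - 1)) powr \<alpha>"
    using assms by (intro powr_mono2) auto
  then show ?thesis
    by (simp add: powr_powr)
qed

lemma eventually_mult_le_if_le_powr:
  fixes u q :: "nat \<Rightarrow> real"
  assumes u_lim: "u \<longlonglongrightarrow> 0" and u_nonneg: "\<And>n. 0 \<le> u n" and "1 < \<alpha>" "0 \<le> B"
    and q: "eventually (\<lambda>n. q n \<le> K * u n powr \<alpha>) sequentially"
  shows "eventually (\<lambda>n. q n * B \<le> u n) sequentially"
proof -
  have "(\<lambda>n. K * B * u n powr (\<alpha> - 1)) \<longlonglongrightarrow> K * B * 0"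
    using \<open>1 < \<alpha>\<close> u_nonneg
    by (intro tendsto_mult tendsto_const tendsto_zero_powrI[OF u_lim tendsto_const]) auto
  then have "eventually (\<lambda>n. K * B * u n powr (\<alpha> - 1) < 1) sequentially"
    by (rule order_tendstoD(2)) simp
  with q show ?thesis
  proof eventually_elim
    case (elim n)
    have "u n powr \<alpha> = u n powr (\<alpha> - 1) * u n"
      using u_nonneg[of n] \<open>1 < \<alpha>\<close> by (cases "u n = 0") (simp_all add: powr_diff)
    then have "q n * B \<le> (K * B * u n powr (\<alpha> - 1)) * u n"
      using mult_right_mono[OF elim(1) \<open>0 \<le> B\<close>] by (simp add: algebra_simps)
    also have "\<dots> \<le> u n"
      using mult_right_mono[of _ 1 "u n"] elim u_nonneg[of n] by simp
    finally show ?case .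
  qed
qed

lemma finite_if_eventually_not_Suc:
  "eventually (\<lambda>n. \<not> P (Suc n)) sequentially \<Longrightarrow> finite {n. P n}"
  unfolding eventually_sequentially_Suc[of "\<lambda>n. \<not> P n"]
  by (simp add: eventually_cofinite flip: cofinite_eq_sequentially)

lemma (in prob_space) AE_eventually_notin_if_prob_le_powr:
  assumes sets: "\<And>n. A n \<in> events" and bound: "\<And>n. prob (A n) \<le> c * (real n + 1) powr s"
    and "s < -1"
  shows "AE x in M. eventually (\<lambda>n. x \<notin> A n) sequentially"
proof -
  have "summable (\<lambda>n. c * (real n + 1) powr s)"
    using summable_powr_Suc_real[OF \<open>s < -1\<close>] by (rule summable_mult)
  then have "summable (\<lambda>n. prob (A n))"
    by (rule summable_comparison_test') (use bound in simp)
  then have "AE x in M. eventually (\<lambda>n. x \<in> space M - A n) sequentially"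
    by (intro borel_cantelli_AE1 sets) (simp_all add: emeasure_eq_measure)
  then show ?thesis
    by eventually_elim (auto elim: eventually_mono)
qed

lemma Zcount_le: "Zcount X n \<omega> j \<le> Suc n"
proof -
  have "Zcount X n \<omega> j \<le> card {..n}"
    unfolding Zcount_def by (rule card_mono) auto
  then show ?thesis by simp
qed

lemma Zcount_Suc:
  "Zcount X (Suc n) \<omega> j = Zcount X n \<omega> j + (if X (Suc n) \<omega> = j then 1 else 0)"
proof -
  have "{l. l \<le> Suc n \<and> X l \<omega> = j} =
      {l. l \<le> n \<and> X l \<omega> = j} \<union> (if X (Suc n) \<omega> = j then {Suc n} else {})"
    by (auto simp: le_Suc_eq)
  then show ?thesis by (simp add: Zcount_def)
qed

definition past_determined :: "'w measure \<Rightarrow> (nat \<Rightarrow> 'w \<Rightarrow> 'n) \<Rightarrow> nat \<Rightarrow> ('w \<Rightarrow> 'a) \<Rightarrow> bool" where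
  "past_determined M X n g \<longleftrightarrow>
     (\<forall>\<omega>\<in>space M. \<forall>\<omega>'\<in>space M. (\<forall>k\<le>n. X k \<omega> = X k \<omega>') \<longrightarrow> g \<omega> = g \<omega>')"

lemma past_determinedI:
  "(\<And>\<omega> \<omega>'. \<omega> \<in> space M \<Longrightarrow> \<omega>' \<in> space M \<Longrightarrow> (\<And>k. k \<le> n \<Longrightarrow> X k \<omega> = X k \<omega>') \<Longrightarrow> g \<omega> = g \<omega>')
    \<Longrightarrow> past_determined M X n g"
  unfolding past_determined_def by blast

lemma past_determinedD:
  "past_determined M X n g \<Longrightarrow> \<omega> \<in> space M \<Longrightarrow> \<omega>' \<in> space M \<Longrightarrow> (\<And>k. k \<le> n \<Longrightarrow> X k \<omega> = X k \<omega>')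
    \<Longrightarrow> g \<omega> = g \<omega>'"
  unfolding past_determined_def by blast

lemma past_determined_mono:
  "past_determined M X m g \<Longrightarrow> m \<le> n \<Longrightarrow> past_determined M X n g"
  unfolding past_determined_def by (meson order_trans)

lemma past_determined_compose2:
  "past_determined M X n f \<Longrightarrow> past_determined M X n g \<Longrightarrow> past_determined M X n (\<lambda>\<omega>. h (f \<omega>) (g \<omega>))"
  unfolding past_determined_def by metis

lemma Zcount_past_determined: "m \<le> n \<Longrightarrow> past_determined M X n (\<lambda>\<omega>. Zcount X m \<omega> j)"
  unfolding past_determined_def Zcount_def by (auto intro!: arg_cong[where f=card])

section \<open>Processes with prescribed transition probabilities\<close>

locale adapted_transitions = prob_space M for M :: "'w measure" +
  fixes X :: "nat \<Rightarrow> 'w \<Rightarrow> 'n::countable" and p :: "nat \<Rightarrow> 'w \<Rightarrow> 'n \<Rightarrow> real"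
  assumes measurable_X: "\<And>n. X n \<in> measurable M (count_space UNIV)"
    and past_determined_p: "\<And>n j. past_determined M X n (\<lambda>\<omega>. p n \<omega> j)"
    and p_nonneg: "\<And>n \<omega> j. 0 \<le> p n \<omega> j"
    and p_le_1: "\<And>n \<omega> j. p n \<omega> j \<le> 1"
    and cond_law: "\<And>n j. AE \<omega> in M.
        real_cond_exp M (nat_filtration M X n) (indicator {\<omega>\<in>space M. X (Suc n) \<omega> = j}) \<omega> = p n \<omega> j"
begin

abbreviation F :: "nat \<Rightarrow> 'w measure" where
  "F n \<equiv> nat_filtration M X n"

lemma X_vimage_in_sets: "X k -` B \<inter> space M \<in> sets M"
  using measurable_X[of k] by (auto simp: measurable_def)

lemma X_eq_event: "{\<omega>\<in>space M. X n \<omega> = j} \<in> events"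
  using measurable_X[of n] by measurable

lemma space_F [simp]: "space (F n) = space M"
  unfolding nat_filtration_def by (simp add: space_measure_of_conv)

lemma sets_F: "sets (F n) = sigma_sets (space M) (\<Union>k\<in>{..n}. {X k -` B \<inter> space M | B. True})"
  unfolding nat_filtration_def by (rule sets_measure_of) auto

lemma subalgebra_F: "subalgebra M (F n)"
  unfolding subalgebra_def sets_F
  by (auto intro!: sets.sigma_sets_subset simp: X_vimage_in_sets)

lemma X_vimage_in_F: "k \<le> n \<Longrightarrow> X k -` B \<inter> space M \<in> sets (F n)"
  unfolding sets_F by (rule sigma_sets.Basic) auto

lemma history_measurable:
  "(\<lambda>\<omega>. restrict (\<lambda>k. X k \<omega>) {..n}) \<in> measurable (F n) (count_space (PiE {..n} (\<lambda>_. UNIV)))"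
proof (subst measurable_count_space_eq_countable)
  show "countable (PiE {..n} (\<lambda>_. UNIV :: 'n set))"
    by (intro countable_PiE) auto
  have "(\<lambda>\<omega>. restrict (\<lambda>k. X k \<omega>) {..n}) -` {h} \<inter> space (F n) = (\<Inter>k\<in>{..n}. X k -` {h k} \<inter> space M)"
    if "h \<in> PiE {..n} (\<lambda>_. UNIV)" for h
    using that by (auto simp: PiE_def extensional_def fun_eq_iff)
  moreover have "(\<Inter>k\<in>{..n}. X k -` {h k} \<inter> space M) \<in> sets (F n)" for h
    by (intro sets.finite_INT X_vimage_in_F) auto
  ultimately show "(\<lambda>\<omega>. restrict (\<lambda>k. X k \<omega>) {..n}) \<in> space (F n) \<rightarrow> PiE {..n} (\<lambda>_. UNIV) \<and>
      (\<forall>h\<in>PiE {..n} (\<lambda>_. UNIV). (\<lambda>\<omega>. restrict (\<lambda>k. X k \<omega>) {..n}) -` {h} \<inter> space (F n) \<in> sets (F n))"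
    by auto
qed

lemma borel_measurable_F_if_past_determined:
  fixes g :: "'w \<Rightarrow> real"
  assumes "past_determined M X n g"
  shows "g \<in> borel_measurable (F n)"
proof -
  define history where "history \<omega> = restrict (\<lambda>k. X k \<omega>) {..n}" for \<omega>
  define \<phi> where "\<phi> h = g (SOME \<omega>. \<omega> \<in> space M \<and> history \<omega> = h)" for h
  have "\<phi> (history \<omega>) = g \<omega>" if \<omega>: "\<omega> \<in> space M" for \<omega>
  proof -
    define \<omega>' where "\<omega>' = (SOME \<omega>'. \<omega>' \<in> space M \<and> history \<omega>' = history \<omega>)"
    have \<omega>'_in: "\<omega>' \<in> space M \<and> history \<omega>' = history \<omega>"
      unfolding \<omega>'_def by (rule someI_ex) (use \<omega> in blast)
    have "X k \<omega> = X k \<omega>'" if "k \<le> n" for k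
    proof -
      have "history \<omega> k = history \<omega>' k"
        using \<omega>'_in by simp
      with that show ?thesis
        by (simp add: history_def)
    qed
    then have "g \<omega> = g \<omega>'"
      using assms \<omega> \<omega>'_in unfolding past_determined_def by blast
    then show ?thesis
      unfolding \<phi>_def \<omega>'_def[symmetric] by simp
  qed
  moreover have "(\<lambda>\<omega>. \<phi> (history \<omega>)) \<in> borel_measurable (F n)"
    unfolding history_def
    by (rule measurable_compose[OF history_measurable]) (simp add: measurable_count_space_eq1)
  ultimately show ?thesis
    using measurable_cong[of "F n" g "\<lambda>\<omega>. \<phi> (history \<omega>)" borel] by simp
qed

lemma borel_measurable_if_past_determined:
  fixes g :: "'w \<Rightarrow> real"
  shows "past_determined M X n g \<Longrightarrow> g \<in> borel_measurable M"
  by (rule measurable_from_subalg[OF subalgebra_F borel_measurable_F_if_past_determined])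

lemma integrable_if_past_determined:
  fixes g :: "'w \<Rightarrow> real"
  assumes "past_determined M X n g" and "\<And>\<omega>. \<omega> \<in> space M \<Longrightarrow> \<bar>g \<omega>\<bar> \<le> B"
  shows "integrable M g"
  using assms borel_measurable_if_past_determined
  by (intro integrable_const_bound[where B=B]) auto

lemma integral_mult_indicator_next_state:
  fixes W :: "'w \<Rightarrow> real"
  assumes W: "past_determined M X n W" and W_bounded: "\<And>\<omega>. \<omega> \<in> space M \<Longrightarrow> \<bar>W \<omega>\<bar> \<le> B"
  shows "(\<integral>\<omega>. W \<omega> * indicator {\<omega>\<in>space M. X (Suc n) \<omega> = j} \<omega> \<partial>M) = (\<integral>\<omega>. W \<omega> * p n \<omega> j \<partial>M)"
proof -
  interpret S: finite_measure_subalgebra M "F n"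
    by unfold_locales (rule subalgebra_F)
  let ?I = "indicator {\<omega>\<in>space M. X (Suc n) \<omega> = j} :: 'w \<Rightarrow> real"
  have I_past: "past_determined M X (Suc n) ?I"
    by (rule past_determinedI) (simp add: indicator_def)
  have "past_determined M X (Suc n) (\<lambda>\<omega>. W \<omega> * ?I \<omega>)"
    using past_determined_compose2[OF past_determined_mono[OF W, of "Suc n"] I_past, of "(*)"] by simp
  moreover have "\<bar>W \<omega> * ?I \<omega>\<bar> \<le> B" if "\<omega> \<in> space M" for \<omega>
    using W_bounded[OF that] by (auto simp: indicator_def)
  ultimately have "integrable M (\<lambda>\<omega>. W \<omega> * ?I \<omega>)"
    by (rule integrable_if_past_determined)
  then have "(\<integral>\<omega>. W \<omega> * ?I \<omega> \<partial>M) = (\<integral>\<omega>. W \<omega> * real_cond_exp M (F n) ?I \<omega> \<partial>M)"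
    by (rule S.real_cond_exp_intg(2)[symmetric, OF _ borel_measurable_F_if_past_determined[OF W]
          borel_measurable_indicator[OF X_eq_event]])
  also have "\<dots> = (\<integral>\<omega>. W \<omega> * p n \<omega> j \<partial>M)"
  proof (rule integral_cong_AE)
    show "(\<lambda>\<omega>. W \<omega> * real_cond_exp M (F n) ?I \<omega>) \<in> borel_measurable M"
      using borel_measurable_if_past_determined[OF W] borel_measurable_cond_exp2 by measurable
    show "(\<lambda>\<omega>. W \<omega> * p n \<omega> j) \<in> borel_measurable M"
      using borel_measurable_if_past_determined[OF W] borel_measurable_if_past_determined[OF past_determined_p]
      by measurable
    show "AE \<omega> in M. W \<omega> * real_cond_exp M (F n) ?I \<omega> = W \<omega> * p n \<omega> j"
      using cond_law[of n j] by eventually_elim simp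
  qed
  finally show ?thesis .
qed

definition occ :: "'n \<Rightarrow> nat \<Rightarrow> 'w \<Rightarrow> real" where
  "occ j n \<omega> = 1 + real (Zcount X n \<omega> j)"

lemma occ_ge_1: "1 \<le> occ j n \<omega>"
  by (simp add: occ_def)

lemma occ_le: "occ j n \<omega> \<le> real n + 2"
  using Zcount_le[of X n \<omega> j] by (simp add: occ_def)

lemma occ_Suc:
  "occ j (Suc n) \<omega> = occ j n \<omega> + indicator {\<omega>\<in>space M. X (Suc n) \<omega> = j} \<omega>" if "\<omega> \<in> space M"
  using that by (simp add: occ_def Zcount_Suc indicator_def)

lemma past_determined_occ:
  assumes "m \<le> n"
  shows "past_determined M X n (occ j m)"
proof (rule past_determinedI)
  fix \<omega> \<omega>'
  assume "\<omega> \<in> space M" "\<omega>' \<in> space M" "\<And>k. k \<le> n \<Longrightarrow> X k \<omega> = X k \<omega>'"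
  then have "Zcount X m \<omega> j = Zcount X m \<omega>' j"
    by (rule past_determinedD[OF Zcount_past_determined[OF assms]])
  then show "occ j m \<omega> = occ j m \<omega>'"
    by (simp add: occ_def)
qed

definition rate_bounded :: "'n \<Rightarrow> real \<Rightarrow> nat \<Rightarrow> nat \<Rightarrow> 'w set" where
  "rate_bounded j B m n = {\<omega>\<in>space M. \<forall>k\<in>{m..n}. p k \<omega> j * B \<le> occ j k \<omega> / (real k + 1)}"

lemma rate_bounded_Suc_subset: "rate_bounded j B m (Suc n) \<subseteq> rate_bounded j B m n"
  unfolding rate_bounded_def by auto

lemma past_determined_rate_bounded:
  "past_determined M X n (indicator (rate_bounded j B m n) :: 'w \<Rightarrow> real)"
proof (rule past_determinedI)
  fix \<omega> \<omega>' assume \<omega>: "\<omega> \<in> space M" "\<omega>' \<in> space M" and same: "\<And>k. k \<le> n \<Longrightarrow> X k \<omega> = X k \<omega>'"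
  have "p k \<omega> j = p k \<omega>' j" "occ j k \<omega> = occ j k \<omega>'" if "k \<le> n" for k
    using past_determinedD[OF past_determined_mono[OF past_determined_p that] \<omega>]
      past_determinedD[OF past_determined_occ[OF that] \<omega>] same
    by auto
  then have "\<omega> \<in> rate_bounded j B m n \<longleftrightarrow> \<omega>' \<in> rate_bounded j B m n"
    using \<omega> unfolding rate_bounded_def by auto
  then show "indicator (rate_bounded j B m n) \<omega> = (indicator (rate_bounded j B m n) \<omega>' :: real)"
    by (simp add: indicator_def)
qed

definition stopped_moment :: "'n \<Rightarrow> nat \<Rightarrow> nat \<Rightarrow> nat \<Rightarrow> 'w \<Rightarrow> real" where
  "stopped_moment j b m n \<omega> = indicator (rate_bounded j (real b * 2 ^ b) m n) \<omega> * occ j n \<omega> ^ b"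

lemma stopped_moment_nonneg: "0 \<le> stopped_moment j b m n \<omega>"
  using occ_ge_1[of j n \<omega>] by (simp add: stopped_moment_def)

lemma stopped_moment_le: "stopped_moment j b m n \<omega> \<le> (real n + 2) ^ b"
  using occ_ge_1[of j n \<omega>] power_mono[OF occ_le[of j n \<omega>], of b]
  by (simp add: stopped_moment_def indicator_def)

lemma integrable_stopped_moment: "integrable M (stopped_moment j b m n)"
proof (rule integrable_if_past_determined)
  show "past_determined M X n (stopped_moment j b m n)"
    unfolding stopped_moment_def
    by (rule past_determined_compose2[OF past_determined_rate_bounded past_determined_occ]) simp
  show "\<bar>stopped_moment j b m n \<omega>\<bar> \<le> (real n + 2) ^ b" for \<omega>
    using stopped_moment_nonneg stopped_moment_le by simp
qed

definition moment_increment :: "'n \<Rightarrow> nat \<Rightarrow> nat \<Rightarrow> nat \<Rightarrow> 'w \<Rightarrow> real" where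
  "moment_increment j b m n \<omega> =
     indicator (rate_bounded j (real b * 2 ^ b) m n) \<omega> * ((occ j n \<omega> + 1) ^ b - occ j n \<omega> ^ b)"

lemma past_determined_moment_increment: "past_determined M X n (moment_increment j b m n)"
  unfolding moment_increment_def
  by (rule past_determined_compose2[OF past_determined_rate_bounded past_determined_occ]) simp

lemma moment_increment_bounds:
  shows moment_increment_nonneg: "0 \<le> moment_increment j b m n \<omega>"
    and moment_increment_le: "moment_increment j b m n \<omega> \<le> (real n + 3) ^ b"
proof -
  have "0 \<le> occ j n \<omega> ^ b" "occ j n \<omega> ^ b \<le> (occ j n \<omega> + 1) ^ b"
    "(occ j n \<omega> + 1) ^ b \<le> (real n + 3) ^ b"
    using occ_ge_1[of j n \<omega>] occ_le[of j n \<omega>] by (auto intro!: power_mono)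
  then show "0 \<le> moment_increment j b m n \<omega>" "moment_increment j b m n \<omega> \<le> (real n + 3) ^ b"
    by (auto simp: moment_increment_def indicator_def)
qed

lemma stopped_moment_Suc_le:
  assumes "\<omega> \<in> space M"
  shows "stopped_moment j b m (Suc n) \<omega>
    \<le> stopped_moment j b m n \<omega> + moment_increment j b m n \<omega> * indicator {\<omega>\<in>space M. X (Suc n) \<omega> = j} \<omega>"
proof (cases "\<omega> \<in> rate_bounded j (real b * 2 ^ b) m (Suc n)")
  case True
  moreover from this have "\<omega> \<in> rate_bounded j (real b * 2 ^ b) m n"
    using rate_bounded_Suc_subset by blast
  ultimately show ?thesis
    using assms by (simp add: stopped_moment_def moment_increment_def occ_Suc indicator_def)
next
  case False
  then show ?thesis
    using stopped_moment_nonneg[of j b m n \<omega>] moment_increment_nonneg[of j b m n \<omega>]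
    by (simp add: stopped_moment_def indicator_def)
qed

lemma moment_increment_mult_p_le:
  assumes "m \<le> n"
  shows "moment_increment j b m n \<omega> * p n \<omega> j \<le> stopped_moment j b m n \<omega> / (real n + 1)"
proof (cases "\<omega> \<in> rate_bounded j (real b * 2 ^ b) m n")
  case True
  define z where "z = occ j n \<omega>"
  have "1 \<le> z"
    unfolding z_def by (rule occ_ge_1)
  have rate: "p n \<omega> j * (real b * 2 ^ b) \<le> z / (real n + 1)"
    using True assms by (auto simp: rate_bounded_def z_def)
  have "z * (((z + 1) ^ b - z ^ b) * p n \<omega> j) \<le> (real b * 2 ^ b * z ^ b) * p n \<omega> j"
    using mult_right_mono[OF mult_power_add_one_diff_le[OF \<open>1 \<le> z\<close>] p_nonneg]
    by (simp add: mult.assoc)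
  also have "\<dots> = z ^ b * (p n \<omega> j * (real b * 2 ^ b))"
    by (simp add: algebra_simps)
  also have "\<dots> \<le> z ^ b * (z / (real n + 1))"
    using rate \<open>1 \<le> z\<close> by (intro mult_left_mono) auto
  also have "\<dots> = z * (z ^ b / (real n + 1))"
    by simp
  finally have "((z + 1) ^ b - z ^ b) * p n \<omega> j \<le> z ^ b / (real n + 1)"
    by (rule mult_left_le_imp_le) (use \<open>1 \<le> z\<close> in simp)
  then show ?thesis
    using True by (simp add: moment_increment_def stopped_moment_def z_def)
next
  case False
  then show ?thesis
    by (simp add: moment_increment_def stopped_moment_def)
qed

lemma integral_stopped_moment_Suc_le:
  assumes "m \<le> n"
  shows "(\<integral>\<omega>. stopped_moment j b m (Suc n) \<omega> \<partial>M)
    \<le> (1 + 1 / (real n + 1)) * (\<integral>\<omega>. stopped_moment j b m n \<omega> \<partial>M)"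
proof -
  let ?W = "stopped_moment j b m"
  let ?D = "moment_increment j b m n"
  let ?I = "indicator {\<omega>\<in>space M. X (Suc n) \<omega> = j} :: 'w \<Rightarrow> real"
  have int_D: "integrable M ?D"
    by (rule integrable_if_past_determined[OF past_determined_moment_increment])
      (use moment_increment_bounds in auto)
  have int_DI: "integrable M (\<lambda>\<omega>. ?D \<omega> * ?I \<omega>)"
    by (rule integrable_real_mult_indicator[OF X_eq_event int_D])
  have int_Dp: "integrable M (\<lambda>\<omega>. ?D \<omega> * p n \<omega> j)"
  proof (rule integrable_if_past_determined)
    show "past_determined M X n (\<lambda>\<omega>. ?D \<omega> * p n \<omega> j)"
      by (rule past_determined_compose2[OF past_determined_moment_increment past_determined_p])
    show "\<bar>?D \<omega> * p n \<omega> j\<bar> \<le> (real n + 3) ^ b" for \<omega>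
      using mult_mono[OF moment_increment_le p_le_1 _ p_nonneg] moment_increment_nonneg p_nonneg
      by (simp add: abs_mult)
  qed
  have "(\<integral>\<omega>. ?W (Suc n) \<omega> \<partial>M) \<le> (\<integral>\<omega>. ?W n \<omega> + ?D \<omega> * ?I \<omega> \<partial>M)"
    by (intro integral_mono_AE integrable_stopped_moment Bochner_Integration.integrable_add int_DI
        AE_I2 stopped_moment_Suc_le)
  also have "\<dots> = (\<integral>\<omega>. ?W n \<omega> \<partial>M) + (\<integral>\<omega>. ?D \<omega> * ?I \<omega> \<partial>M)"
    by (intro Bochner_Integration.integral_add integrable_stopped_moment int_DI)
  also have "(\<integral>\<omega>. ?D \<omega> * ?I \<omega> \<partial>M) = (\<integral>\<omega>. ?D \<omega> * p n \<omega> j \<partial>M)"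
    by (rule integral_mult_indicator_next_state[OF past_determined_moment_increment])
      (use moment_increment_bounds in auto)
  also have "\<dots> \<le> (\<integral>\<omega>. ?W n \<omega> / (real n + 1) \<partial>M)"
    by (intro integral_mono int_Dp integrable_divide integrable_stopped_moment
        moment_increment_mult_p_le assms)
  also have "\<dots> = (\<integral>\<omega>. ?W n \<omega> \<partial>M) / (real n + 1)"
    by simp
  finally show ?thesis
    by (simp add: algebra_simps add_divide_distrib)
qed

lemma integral_stopped_moment_le:
  "(\<integral>\<omega>. stopped_moment j b m n \<omega> \<partial>M) \<le> (real m + 2) ^ b * (real n + 1)"
proof -
  have crude: "(\<integral>\<omega>. stopped_moment j b m k \<omega> \<partial>M) \<le> (real k + 2) ^ b" for k
  proof -
    have "(\<integral>\<omega>. stopped_moment j b m k \<omega> \<partial>M) \<le> (\<integral>\<omega>. (real k + 2) ^ b \<partial>M)"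
      by (intro integral_mono integrable_stopped_moment stopped_moment_le) simp
    then show ?thesis
      by (simp add: prob_space)
  qed
  show ?thesis
  proof (induction n)
    case 0
    show ?case
      using crude[of 0] power_mono[of 2 "real m + 2" b] by simp
  next
    case (Suc n)
    show ?case
    proof (cases "m \<le> n")
      case True
      have "(\<integral>\<omega>. stopped_moment j b m (Suc n) \<omega> \<partial>M)
          \<le> (1 + 1 / (real n + 1)) * (\<integral>\<omega>. stopped_moment j b m n \<omega> \<partial>M)"
        by (rule integral_stopped_moment_Suc_le[OF True])
      also have "\<dots> \<le> (1 + 1 / (real n + 1)) * ((real m + 2) ^ b * (real n + 1))"
        by (intro mult_left_mono Suc.IH) simp
      also have "\<dots> = (real m + 2) ^ b * (real (Suc n) + 1)"
        by (simp add: field_simps)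
      finally show ?thesis .
    next
      case False
      have "(\<integral>\<omega>. stopped_moment j b m (Suc n) \<omega> \<partial>M) \<le> (real (Suc n) + 2) ^ b"
        by (rule crude)
      also have "\<dots> \<le> (real m + 2) ^ b"
        using False by (intro power_mono) auto
      also have "\<dots> \<le> (real m + 2) ^ b * (real (Suc n) + 1)"
        by simp
      finally show ?thesis .
    qed
  qed
qed

lemma prob_stopped_moment_ge_le:
  assumes "3 \<le> real b * \<eta>"
  shows "prob {\<omega>\<in>space M. (real n + 1) powr (real b * \<eta>) \<le> stopped_moment j b m n \<omega>}
    \<le> (real m + 2) ^ b * (real n + 1) powr (-2)"
proof -
  have "prob {\<omega>\<in>space M. (real n + 1) powr (real b * \<eta>) \<le> stopped_moment j b m n \<omega>}
      \<le> (\<integral>\<omega>. stopped_moment j b m n \<omega> \<partial>M) / (real n + 1) powr (real b * \<eta>)"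
    by (rule integral_Markov_inequality_measure[OF integrable_stopped_moment])
      (auto simp: stopped_moment_nonneg)
  also have "\<dots> \<le> (real m + 2) ^ b * (real n + 1) / (real n + 1) powr (real b * \<eta>)"
    by (intro divide_right_mono integral_stopped_moment_le) simp
  also have "\<dots> = (real m + 2) ^ b * (real n + 1) powr (1 - real b * \<eta>)"
    by (simp add: powr_diff)
  also have "\<dots> \<le> (real m + 2) ^ b * (real n + 1) powr (-2)"
    using assms by (intro mult_left_mono powr_mono) auto
  finally show ?thesis .
qed

lemma AE_occ_small_if_rate_bounded:
  assumes "0 < \<eta>" and "3 \<le> real b * \<eta>"
  shows "AE \<omega> in M. (\<forall>n. \<omega> \<in> rate_bounded j (real b * 2 ^ b) m n) \<longrightarrow>
           eventually (\<lambda>n. occ j n \<omega> < (real n + 1) powr \<eta>) sequentially"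
proof -
  define C where "C n = {\<omega>\<in>space M. (real n + 1) powr (real b * \<eta>) \<le> stopped_moment j b m n \<omega>}" for n
  have C_events: "C n \<in> events" for n
    unfolding C_def using borel_measurable_integrable[OF integrable_stopped_moment] by measurable
  have C_prob: "prob (C n) \<le> (real m + 2) ^ b * (real n + 1) powr (-2)" for n
    unfolding C_def by (rule prob_stopped_moment_ge_le[OF assms(2)])
  have "AE \<omega> in M. eventually (\<lambda>n. \<omega> \<notin> C n) sequentially"
    by (rule AE_eventually_notin_if_prob_le_powr[OF C_events C_prob]) simp
  then show ?thesis
  proof eventually_elim
    case (elim \<omega>)
    show ?case
    proof
      assume bounded: "\<forall>n. \<omega> \<in> rate_bounded j (real b * 2 ^ b) m n"
      from elim show "eventually (\<lambda>n. occ j n \<omega> < (real n + 1) powr \<eta>) sequentially"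
      proof eventually_elim
        case (elim n)
        have "occ j n \<omega> ^ b < (real n + 1) powr (real b * \<eta>)"
          using elim bounded[rule_format, of n]
          by (auto simp: C_def stopped_moment_def rate_bounded_def)
        also have "\<dots> = ((real n + 1) powr \<eta>) ^ b"
          by (simp add: powr_realpow[symmetric] powr_powr mult.commute)
        finally show ?case
          by (rule power_less_imp_less_base) simp
      qed
    qed
  qed
qed

definition small_rate_event :: "'n \<Rightarrow> real \<Rightarrow> real \<Rightarrow> real \<Rightarrow> nat \<Rightarrow> 'w set" where
  "small_rate_event j K \<alpha> \<eta> n = {\<omega>\<in>space M.
     p n \<omega> j \<le> K * (occ j n \<omega> / (real n + 1)) powr \<alpha> \<and> occ j n \<omega> < (real n + 1) powr \<eta>}"

lemma past_determined_small_rate_event: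
  "past_determined M X n (indicator (small_rate_event j K \<alpha> \<eta> n) :: 'w \<Rightarrow> real)"
proof (rule past_determinedI)
  fix \<omega> \<omega>' assume \<omega>: "\<omega> \<in> space M" "\<omega>' \<in> space M" and same: "\<And>k. k \<le> n \<Longrightarrow> X k \<omega> = X k \<omega>'"
  have "p n \<omega> j = p n \<omega>' j" "occ j n \<omega> = occ j n \<omega>'"
    using past_determinedD[OF past_determined_p \<omega> same]
      past_determinedD[OF past_determined_occ[OF order_refl] \<omega> same] by auto
  then show "indicator (small_rate_event j K \<alpha> \<eta> n) \<omega> = (indicator (small_rate_event j K \<alpha> \<eta> n) \<omega>' :: real)"
    using \<omega> by (simp add: small_rate_event_def indicator_def)
qed

lemma small_rate_event_in_events: "small_rate_event j K \<alpha> \<eta> n \<in> events"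
proof -
  have "small_rate_event j K \<alpha> \<eta> n \<inter> space M \<in> events"
    using borel_measurable_if_past_determined[OF past_determined_small_rate_event]
    by (simp add: borel_measurable_indicator_iff)
  moreover have "small_rate_event j K \<alpha> \<eta> n \<inter> space M = small_rate_event j K \<alpha> \<eta> n"
    by (auto simp: small_rate_event_def)
  ultimately show ?thesis
    by simp
qed

lemma prob_small_rate_event_visit_le:
  assumes "0 \<le> K" and "0 < \<alpha>"
  shows "prob (small_rate_event j K \<alpha> \<eta> n \<inter> {\<omega>\<in>space M. X (Suc n) \<omega> = j})
    \<le> K * (real n + 1) powr ((\<eta> - 1) * \<alpha>)"
proof -
  let ?S = "small_rate_event j K \<alpha> \<eta> n"
  have bound: "indicator ?S \<omega> * p n \<omega> j \<le> K * (real n + 1) powr ((\<eta> - 1) * \<alpha>)" for \<omega>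
  proof (cases "\<omega> \<in> ?S")
    case True
    then have "p n \<omega> j \<le> K * (occ j n \<omega> / (real n + 1)) powr \<alpha>"
      and "occ j n \<omega> < (real n + 1) powr \<eta>"
      by (auto simp: small_rate_event_def)
    moreover have "(occ j n \<omega> / (real n + 1)) powr \<alpha> \<le> (real n + 1) powr ((\<eta> - 1) * \<alpha>)"
      using calculation(2) occ_ge_1[of j n \<omega>] \<open>0 < \<alpha>\<close>
      by (intro powr_ratio_le_powr) auto
    ultimately show ?thesis
      using True \<open>0 \<le> K\<close> by (simp add: order_trans[OF _ mult_left_mono])
  next
    case False
    then show ?thesis
      using \<open>0 \<le> K\<close> by simp
  qed
  have "integrable M (\<lambda>\<omega>. indicator ?S \<omega> * p n \<omega> j)"
  proof (rule integrable_if_past_determined)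
    show "past_determined M X n (\<lambda>\<omega>. indicator ?S \<omega> * p n \<omega> j)"
      by (rule past_determined_compose2[OF past_determined_small_rate_event past_determined_p])
    show "\<bar>indicator ?S \<omega> * p n \<omega> j\<bar> \<le> 1" for \<omega>
      using p_nonneg[of n \<omega> j] p_le_1[of n \<omega> j] by (simp add: indicator_def)
  qed
  have "prob (?S \<inter> {\<omega>\<in>space M. X (Suc n) \<omega> = j})
      = (\<integral>\<omega>. indicator ?S \<omega> * indicator {\<omega>\<in>space M. X (Suc n) \<omega> = j} \<omega> \<partial>M)"
    using small_rate_event_in_events X_eq_event
    by (simp add: indicator_inter_arith[symmetric] Int_absorb2 sets.sets_into_space)
  also have "\<dots> = (\<integral>\<omega>. indicator ?S \<omega> * p n \<omega> j \<partial>M)"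
    by (rule integral_mult_indicator_next_state[OF past_determined_small_rate_event, where B=1])
      (simp add: indicator_def)
  also have "\<dots> \<le> (\<integral>\<omega>. K * (real n + 1) powr ((\<eta> - 1) * \<alpha>) \<partial>M)"
    by (intro integral_mono bound \<open>integrable M (\<lambda>\<omega>. indicator ?S \<omega> * p n \<omega> j)\<close>) simp
  also have "\<dots> = K * (real n + 1) powr ((\<eta> - 1) * \<alpha>)"
    by (simp add: prob_space)
  finally show ?thesis .
qed

lemma AE_eventually_no_visit_if_rate_small:
  assumes "(\<eta> - 1) * \<alpha> < -1" and "0 \<le> K" and "0 < \<alpha>"
  shows "AE \<omega> in M. eventually (\<lambda>n. \<not> (p n \<omega> j \<le> K * (occ j n \<omega> / (real n + 1)) powr \<alpha>
           \<and> occ j n \<omega> < (real n + 1) powr \<eta> \<and> X (Suc n) \<omega> = j)) sequentially"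
proof -
  have "AE \<omega> in M. eventually (\<lambda>n.
      \<omega> \<notin> small_rate_event j K \<alpha> \<eta> n \<inter> {\<omega>\<in>space M. X (Suc n) \<omega> = j}) sequentially"
    by (rule AE_eventually_notin_if_prob_le_powr[OF sets.Int[OF small_rate_event_in_events X_eq_event]
          prob_small_rate_event_visit_le[OF assms(2,3)] assms(1)])
  then show ?thesis
    by (rule AE_mp) (auto simp: small_rate_event_def elim!: eventually_mono intro!: AE_I2)
qed

theorem AE_finite_visits_if_trans_prob_le_powr:
  assumes "1 < \<alpha>" and "0 \<le> K"
  shows "AE \<omega> in M. (\<lambda>n. occ j n \<omega> / (real n + 1)) \<longlonglongrightarrow> 0 \<longrightarrow>
           eventually (\<lambda>n. p n \<omega> j \<le> K * (occ j n \<omega> / (real n + 1)) powr \<alpha>) sequentially \<longrightarrow>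
           finite {n. X n \<omega> = j}"
proof -
  define \<eta> where "\<eta> = (1 - 1 / \<alpha>) / 2"
  define b where "b = nat \<lceil>3 / \<eta>\<rceil>"
  have "0 < \<eta>" "(\<eta> - 1) * \<alpha> < -1"
    using assms by (simp_all add: \<eta>_def field_simps)
  moreover have "3 / \<eta> \<le> real b"
    unfolding b_def by (rule real_nat_ceiling_ge)
  with \<open>0 < \<eta>\<close> have "3 \<le> real b * \<eta>"
    by (simp add: divide_le_eq)
  ultimately have small: "AE \<omega> in M. \<forall>m. (\<forall>n. \<omega> \<in> rate_bounded j (real b * 2 ^ b) m n) \<longrightarrow>
      eventually (\<lambda>n. occ j n \<omega> < (real n + 1) powr \<eta>) sequentially"
    by (subst AE_all_countable) (intro allI AE_occ_small_if_rate_bounded)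
  have no_visit: "AE \<omega> in M. eventually (\<lambda>n. \<not> (p n \<omega> j \<le> K * (occ j n \<omega> / (real n + 1)) powr \<alpha>
      \<and> occ j n \<omega> < (real n + 1) powr \<eta> \<and> X (Suc n) \<omega> = j)) sequentially"
    by (rule AE_eventually_no_visit_if_rate_small) (use assms \<open>(\<eta> - 1) * \<alpha> < -1\<close> in auto)
  show ?thesis
    using small no_visit AE_space
  proof eventually_elim
    case (elim \<omega>)
    show ?case
    proof (intro impI)
      assume lim: "(\<lambda>n. occ j n \<omega> / (real n + 1)) \<longlonglongrightarrow> 0"
        and rate: "eventually (\<lambda>n. p n \<omega> j \<le> K * (occ j n \<omega> / (real n + 1)) powr \<alpha>) sequentially"
      have "eventually (\<lambda>n. p n \<omega> j * (real b * 2 ^ b) \<le> occ j n \<omega> / (real n + 1)) sequentially"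
        using lim rate \<open>1 < \<alpha>\<close> order_trans[OF zero_le_one occ_ge_1]
        by (intro eventually_mult_le_if_le_powr) auto
      then obtain m where "\<And>n. m \<le> n \<Longrightarrow> p n \<omega> j * (real b * 2 ^ b) \<le> occ j n \<omega> / (real n + 1)"
        by (auto simp: eventually_sequentially)
      then have "\<forall>n. \<omega> \<in> rate_bounded j (real b * 2 ^ b) m n"
        using elim(3) by (auto simp: rate_bounded_def)
      then have "eventually (\<lambda>n. occ j n \<omega> < (real n + 1) powr \<eta>) sequentially"
        using elim(1) by blast
      with rate elim(2) have "eventually (\<lambda>n. \<not> X (Suc n) \<omega> = j) sequentially"
        by eventually_elim blast
      then show "finite {n. X n \<omega> = j}"
        by (rule finite_if_eventually_not_Suc)
    qed
  qed
qed

end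

section \<open>The vertex reinforced random walk\<close>

lemma trans_prob_nonneg: "\<forall>i k. 0 \<le> A $ i $ k \<Longrightarrow> 0 \<le> trans_prob A \<alpha> X n \<omega> j"
  unfolding trans_prob_def by (intro divide_nonneg_nonneg sum_nonneg mult_nonneg_nonneg) auto

lemma trans_prob_le_1:
  assumes "\<forall>i k. 0 \<le> A $ i $ k"
  shows "trans_prob A \<alpha> X n \<omega> j \<le> 1"
proof -
  let ?w = "\<lambda>k. A $ X n \<omega> $ k * (1 + real (Zcount X n \<omega> k)) powr \<alpha>"
  have "0 \<le> ?w j" "?w j \<le> sum ?w UNIV"
    using assms by (auto intro!: member_le_sum)
  then show ?thesis
    unfolding trans_prob_def by (cases "sum ?w UNIV = 0") (auto simp: divide_le_eq_1)
qed

lemma past_determined_trans_prob: "past_determined M X n (\<lambda>\<omega>. trans_prob A \<alpha> X n \<omega> j)"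
proof (rule past_determinedI)
  fix \<omega> \<omega>' assume \<omega>: "\<omega> \<in> space M" "\<omega>' \<in> space M" and same: "\<And>k. k \<le> n \<Longrightarrow> X k \<omega> = X k \<omega>'"
  have "Zcount X n \<omega> k = Zcount X n \<omega>' k" for k
    using past_determinedD[OF Zcount_past_determined[OF order_refl] \<omega> same] .
  moreover have "X n \<omega> = X n \<omega>'"
    using same by simp
  ultimately show "trans_prob A \<alpha> X n \<omega> j = trans_prob A \<alpha> X n \<omega>' j"
    by (simp add: trans_prob_def)
qed

lemma trans_prob_le_powr_if_denominator_ge:
  assumes A_nonneg: "\<forall>i k. 0 \<le> A $ i $ k" and A_le: "\<forall>i k. A $ i $ k \<le> a" and "0 < c"
    and denom: "c * (real n + 1) powr \<alpha> \<le> A $ X n \<omega> $ k * (1 + real (Zcount X n \<omega> k)) powr \<alpha>"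
  shows "trans_prob A \<alpha> X n \<omega> j \<le> a / c * ((1 + real (Zcount X n \<omega> j)) / (real n + 1)) powr \<alpha>"
proof -
  let ?w = "\<lambda>k. A $ X n \<omega> $ k * (1 + real (Zcount X n \<omega> k)) powr \<alpha>"
  let ?z = "(1 + real (Zcount X n \<omega> j)) powr \<alpha>"
  have "?w k \<le> sum ?w UNIV"
    using A_nonneg by (intro member_le_sum) auto
  with denom have D: "c * (real n + 1) powr \<alpha> \<le> sum ?w UNIV"
    by linarith
  have cn: "0 < c * (real n + 1) powr \<alpha>"
    using \<open>0 < c\<close> by simp
  have "0 \<le> a"
    using A_nonneg A_le by (meson order_trans)
  have "trans_prob A \<alpha> X n \<omega> j = A $ X n \<omega> $ j * ?z / sum ?w UNIV"
    by (simp add: trans_prob_def)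
  also have "\<dots> \<le> a * ?z / sum ?w UNIV"
    using A_le cn D by (intro divide_right_mono mult_right_mono) auto
  also have "\<dots> \<le> a * ?z / (c * (real n + 1) powr \<alpha>)"
    using \<open>0 \<le> a\<close> cn D by (intro divide_left_mono mult_nonneg_nonneg) auto
  also have "\<dots> = a / c * ((1 + real (Zcount X n \<omega> j)) / (real n + 1)) powr \<alpha>"
    by (simp add: powr_divide)
  finally show ?thesis .
qed

lemma Zcount_ratio_tendsto:
  assumes "(\<lambda>n. empirical X n \<omega>) \<longlonglongrightarrow> v"
  shows "(\<lambda>n. (1 + real (Zcount X n \<omega> j)) / (real n + 1)) \<longlonglongrightarrow> v $ j"
proof -
  have "(1 + real (Zcount X n \<omega> j)) / (real n + 1) = inverse (real (Suc n)) + empirical X n \<omega> $ j" for n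
    by (simp add: empirical_def add_divide_distrib divide_inverse add.commute distrib_right)
  moreover have "(\<lambda>n. inverse (real (Suc n)) + empirical X n \<omega> $ j) \<longlonglongrightarrow> 0 + v $ j"
    by (intro tendsto_add LIMSEQ_inverse_real_of_nat tendsto_vec_nth assms)
  ultimately show ?thesis
    by simp
qed

lemma eventually_trans_prob_le_powr:
  fixes A :: "real^'n^'n" and X :: "nat \<Rightarrow> 'w \<Rightarrow> 'n::finite"
  assumes A_nonneg: "\<forall>i k. 0 \<le> A $ i $ k" and reach: "\<And>x. \<exists>k. 0 < A $ x $ k \<and> 0 < v $ k"
    and "0 < \<alpha>"
  obtains K where "0 \<le> K"
    and "\<And>\<omega> j. (\<lambda>n. empirical X n \<omega>) \<longlonglongrightarrow> v \<Longrightarrow> eventually (\<lambda>n.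
           trans_prob A \<alpha> X n \<omega> j \<le> K * ((1 + real (Zcount X n \<omega> j)) / (real n + 1)) powr \<alpha>) sequentially"
proof -
  obtain \<kappa> where \<kappa>: "\<forall>x. 0 < A $ x $ \<kappa> x \<and> 0 < v $ \<kappa> x"
    using reach by metis
  define c where "c = Min (range (\<lambda>x. A $ x $ \<kappa> x * (v $ \<kappa> x / 2) powr \<alpha>))"
  define a where "a = Max (range (\<lambda>(i, k). A $ i $ k))"
  have "0 < c"
    unfolding c_def by (subst Min_gr_iff) (use \<kappa> in \<open>auto intro!: mult_pos_pos simp: less_le\<close>)
  have A_le: "\<forall>i k. A $ i $ k \<le> a"
    unfolding a_def by (auto intro!: Max_ge)
  show ?thesis
  proof (rule that[of "a / c"])
    show "0 \<le> a / c"
      using A_nonneg A_le \<open>0 < c\<close> by (meson divide_nonneg_pos order_trans)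
    fix \<omega> j
    assume lim: "(\<lambda>n. empirical X n \<omega>) \<longlonglongrightarrow> v"
    have "eventually (\<lambda>n. \<forall>x. v $ \<kappa> x / 2 < empirical X n \<omega> $ \<kappa> x) sequentially"
      using \<kappa> by (intro eventually_all_finite order_tendstoD(1)[OF tendsto_vec_nth[OF lim]]) auto
    then show "eventually (\<lambda>n.
        trans_prob A \<alpha> X n \<omega> j \<le> a / c * ((1 + real (Zcount X n \<omega> j)) / (real n + 1)) powr \<alpha>) sequentially"
    proof eventually_elim
      case (elim n)
      define k where "k = \<kappa> (X n \<omega>)"
      have "0 < A $ X n \<omega> $ k" "0 < v $ k"
        using \<kappa> by (auto simp: k_def)
      have "(real n + 1) * (v $ k / 2) \<le> 1 + real (Zcount X n \<omega> k)"
        using elim[rule_format, of "X n \<omega>"] by (simp add: k_def empirical_def field_simps)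
      then have "((real n + 1) * (v $ k / 2)) powr \<alpha> \<le> (1 + real (Zcount X n \<omega> k)) powr \<alpha>"
        using \<open>0 < v $ k\<close> \<open>0 < \<alpha>\<close> by (intro powr_mono2) auto
      moreover have "((real n + 1) * (v $ k / 2)) powr \<alpha> = (v $ k / 2) powr \<alpha> * (real n + 1) powr \<alpha>"
        using \<open>0 < v $ k\<close> by (subst powr_mult) (auto simp: mult.commute)
      ultimately have upper: "A $ X n \<omega> $ k * (v $ k / 2) powr \<alpha> * (real n + 1) powr \<alpha>
          \<le> A $ X n \<omega> $ k * (1 + real (Zcount X n \<omega> k)) powr \<alpha>"
        using \<open>0 < A $ X n \<omega> $ k\<close> by (simp add: mult.assoc)
      have "c \<le> A $ X n \<omega> $ k * (v $ k / 2) powr \<alpha>"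
        unfolding c_def k_def by (rule Min_le) auto
      then have "c * (real n + 1) powr \<alpha> \<le> A $ X n \<omega> $ k * (1 + real (Zcount X n \<omega> k)) powr \<alpha>"
        by (rule order_trans[OF mult_right_mono[OF _ powr_ge_zero] upper])
      then show ?case
        by (rule trans_prob_le_powr_if_denominator_ge[OF A_nonneg A_le \<open>0 < c\<close>])
    qed
  qed
qed

lemma Delta_reachable_support:
  assumes "v \<in> Delta A" and A_offdiag: "\<forall>i j. i \<noteq> j \<longrightarrow> 0 < A $ i $ j"
    and A_nonneg: "\<forall>i j. 0 \<le> A $ i $ j"
  shows "\<exists>k. 0 < A $ x $ k \<and> 0 < v $ k"
proof (cases "\<exists>k. k \<noteq> x \<and> 0 < v $ k")
  case True
  then obtain k where "k \<noteq> x" "0 < v $ k"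
    by blast
  then show ?thesis
    using A_offdiag by metis
next
  case False
  have v_nonneg: "0 \<le> v $ k" and v_sum: "(\<Sum>k\<in>UNIV. v $ k) = 1"
    and v_le: "A $ k $ k = 0 \<Longrightarrow> v $ k \<le> 3 / 4" for k
    using assms(1) by (auto simp: Delta_def)
  have "v $ k = 0" if "k \<noteq> x" for k
    using False v_nonneg[of k] that by (metis less_eq_real_def)
  then have "(\<Sum>k\<in>UNIV - {x}. v $ k) = 0"
    by (intro sum.neutral) auto
  then have "v $ x = 1"
    using v_sum sum.remove[of UNIV x "\<lambda>k. v $ k"] by simp
  then have "A $ x $ x \<noteq> 0"
    using v_le[of x] by auto
  then have "0 < A $ x $ x"
    using A_nonneg by (simp add: order_less_le)
  with \<open>v $ x = 1\<close> show ?thesis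
    by auto
qed

theorem theorem3p12:
  fixes M :: "'w measure" and X :: "nat \<Rightarrow> 'w \<Rightarrow> 'n::finite"
    and A :: "real^'n^'n" and \<alpha> :: real and vstar :: "real^'n"
  assumes N2: "CARD('n) \<ge> 2"
    and alpha: "\<alpha> > 1"
    and A_sym: "\<forall>i j. A $ i $ j = A $ j $ i"
    and A_nonneg: "\<forall>i j. 0 \<le> A $ i $ j"
    and A_offdiag: "\<forall>i j. i \<noteq> j \<longrightarrow> 0 < A $ i $ j"
    and A_rowsum: "\<exists>c. \<forall>i. (\<Sum>j\<in>UNIV. A $ i $ j) = c"
    and P: "prob_space M"
    and X_meas: "\<forall>n. X n \<in> measurable M (count_space UNIV)"
    and X_law: "\<forall>n j. AE \<omega> in M.
        real_cond_exp M (nat_filtration M X n) (indicator {\<omega>\<in>space M. X (Suc n) \<omega> = j}) \<omega>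
          = trans_prob A \<alpha> X n \<omega> j"
    and stable: "linearly_stable A \<alpha> vstar"
  shows "AE \<omega> in M. (\<lambda>n. empirical X n \<omega>) \<longlonglongrightarrow> vstar \<longrightarrow>
           finite {n. X n \<omega> \<notin> {i. vstar $ i \<noteq> 0}}"
proof -
  have "vstar \<in> Delta A"
    using stable by (simp add: linearly_stable_def equilibrium_def)
  interpret adapted_transitions M X "trans_prob A \<alpha> X"
    by (rule adapted_transitions.intro[OF P], unfold_locales)
      (use X_meas X_law A_nonneg trans_prob_nonneg trans_prob_le_1 past_determined_trans_prob in auto)
  obtain K where "0 \<le> K" and rate: "\<And>\<omega> j. (\<lambda>n. empirical X n \<omega>) \<longlonglongrightarrow> vstar \<Longrightarrow> eventually (\<lambda>n.
      trans_prob A \<alpha> X n \<omega> j \<le> K * ((1 + real (Zcount X n \<omega> j)) / (real n + 1)) powr \<alpha>) sequentially"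
    by (rule eventually_trans_prob_le_powr[where X = X and \<alpha> = \<alpha>,
          OF A_nonneg Delta_reachable_support[OF \<open>vstar \<in> Delta A\<close> A_offdiag A_nonneg]])
      (use alpha in auto)
  have "AE \<omega> in M. \<forall>j. (\<lambda>n. occ j n \<omega> / (real n + 1)) \<longlonglongrightarrow> 0 \<longrightarrow>
      eventually (\<lambda>n. trans_prob A \<alpha> X n \<omega> j \<le> K * (occ j n \<omega> / (real n + 1)) powr \<alpha>) sequentially \<longrightarrow>
      finite {n. X n \<omega> = j}"
    by (subst AE_all_countable) (intro allI AE_finite_visits_if_trans_prob_le_powr alpha \<open>0 \<le> K\<close>)
  then show ?thesis
  proof eventually_elim
    case (elim \<omega>)
    show ?case
    proof
      assume lim: "(\<lambda>n. empirical X n \<omega>) \<longlonglongrightarrow> vstar"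
      have "finite {n. X n \<omega> = j}" if "vstar $ j = 0" for j
        using elim rate[OF lim, of j] Zcount_ratio_tendsto[OF lim, of j] that by (simp add: occ_def)
      then have "finite (\<Union>j\<in>{j. vstar $ j = 0}. {n. X n \<omega> = j})"
        by auto
      then show "finite {n. X n \<omega> \<notin> {i. vstar $ i \<noteq> 0}}"
        by (rule rev_finite_subset) auto
    qed
  qed
qed

end
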